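(* Let $(V,d,k,q)$ be an instance of the individually fair $k$-center with outliers problem (IF$k$CO) as defined in the context and let $l\ge 0$ be an integer. Then the refined algorithm (Algorithm 3) described in the context, run with parameter $l$, outputs a feasible solution $(S,O,\sigma)$ for this instance, i.e. $|S|\le k$ and $|O|\le q$.
   Context: IF$k$CO instance: a finite set $V$ with $|V|=n$, a metric $d$ on $V$ (nonnegative, symmetric, $d_{ii}=0$, triangle inequality), and integers $k\ge 1$ and $q\ge 0$. For $i\in V$, $NR_q(i)$ is the distance from $i$ to its $\lceil (n-q)/k\rceil$-th nearest neighbor in $V$, where $i$ counts as its own (first) nearest neighbor. A solution is $(S,O,\sigma)$ with $S,O\subseteq V$ and $\sigma:V\setminus O\to S$; feasible if $|S|\le k$, $|O|\le q$. For $\beta>0$, procedure $A(\beta)$: set $P:=V$, $S:=\emptyset$; while $P\ne\emptyset$ and $|S|<k$: pick $s\in P$ minimizing $NR_q(i)$ over $i\in P$, set $S:=S\cup\{s\}$, $P:=\{i\in P: d_{is}>\beta\, NR_q(i)\}$; finally set $O:=P$ and let $\sigma(i)$ be a nearest center in $S$ for each $i\in V\setminus O$. Algorithm 2 is $A(2)$. Algorithm 3 (input: instance and integer $l\ge0$): compute $(S,O,\sigma):=$ output of Algorithm 2; set $t:=0$, $\beta_1:=1$, $\beta_2:=2$, $\beta:=\beta_1$. While $t<l$: run $A(\beta)$ obtaining $(S_\beta,O_\beta,\sigma_\beta)$; if $|O_\beta|>q$, set $\beta_1:=\beta$; if $|O_\beta|\le q$, set $(S,O,\sigma):=(S_\beta,O_\beta,\sigma_\beta)$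 and $\beta_2:=\beta$; in either case then set $\beta:=(\beta_1+\beta_2)/2$ and $t:=t+1$. Output $(S,O,\sigma)$. *)

theory Defs
  imports Complex_Main "HOL-Library.Multiset"
begin

definition ifkco_metric :: "'a set \<Rightarrow> ('a \<Rightarrow> 'a \<Rightarrow> real) \<Rightarrow> bool" where
  "ifkco_metric V d \<longleftrightarrow>
     (\<forall>i\<in>V. d i i = 0) \<and>
     (\<forall>i\<in>V. \<forall>j\<in>V. 0 \<le> d i j \<and> d i j = d j i) \<and>
     (\<forall>i\<in>V. \<forall>j\<in>V. \<forall>h\<in>V. d i h \<le> d i j + d j h)"

definition nr_rank :: "'a set \<Rightarrow> nat \<Rightarrow> nat \<Rightarrow> int" where
  "nr_rank V k q = \<lceil>(real (card V) - real q) / real k\<rceil>"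

text \<open>NR_q(i): the m-th smallest element of the multiset of distances from i to the
  points of V (i itself contributes distance 0, its own first nearest neighbour).
  Convention: if m \<le> 0 (only possible when q \<ge> n), the 1st nearest neighbour is used.\<close>
definition NR :: "'a set \<Rightarrow> ('a \<Rightarrow> 'a \<Rightarrow> real) \<Rightarrow> nat \<Rightarrow> nat \<Rightarrow> 'a \<Rightarrow> real" where
  "NR V d k q i =
     sorted_list_of_multiset (image_mset (d i) (mset_set V)) ! (nat (nr_rank V k q) - 1)"

definition A_step :: "'a set \<Rightarrow> ('a \<Rightarrow> 'a \<Rightarrow> real) \<Rightarrow> nat \<Rightarrow> nat \<Rightarrow> real
      \<Rightarrow> 'a set \<times> 'a set \<Rightarrow> 'a set \<times> 'a set \<Rightarrow> bool" where
  "A_step V d k q \<beta> st st' \<longleftrightarrow>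
     (let S = fst st; P = snd st in
       P \<noteq> {} \<and> card S < k \<and>
       (\<exists>s\<in>P. (\<forall>i\<in>P. NR V d k q s \<le> NR V d k q i) \<and>
              st' = (insert s S, {i\<in>P. d i s > \<beta> * NR V d k q i})))"

definition A_out :: "'a set \<Rightarrow> ('a \<Rightarrow> 'a \<Rightarrow> real) \<Rightarrow> nat \<Rightarrow> nat \<Rightarrow> real
      \<Rightarrow> 'a set \<times> 'a set \<times> ('a \<Rightarrow> 'a) \<Rightarrow> bool" where
  "A_out V d k q \<beta> sol \<longleftrightarrow>
     (case sol of (S, Out, \<sigma>) \<Rightarrow>
        (A_step V d k q \<beta>)\<^sup>*\<^sup>* ({}, V) (S, Out) \<and>
        \<not> (Out \<noteq> {} \<and> card S < k) \<and>
        (\<forall>i\<in>V - Out. \<sigma> i \<in> S \<and> (\<forall>s\<in>S. d i (\<sigma> i) \<le> d i s)))"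

inductive alg3_state :: "'a set \<Rightarrow> ('a \<Rightarrow> 'a \<Rightarrow> real) \<Rightarrow> nat \<Rightarrow> nat \<Rightarrow> nat
      \<Rightarrow> nat \<Rightarrow> real \<Rightarrow> real \<Rightarrow> real \<Rightarrow> 'a set \<times> 'a set \<times> ('a \<Rightarrow> 'a) \<Rightarrow> bool"
  for V d k q l where
  init: "A_out V d k q 2 sol \<Longrightarrow> alg3_state V d k q l 0 1 2 1 sol"
| infeasible: "\<lbrakk>alg3_state V d k q l t b1 b2 b sol; t < l; A_out V d k q b (Sb, Ob, \<sigma>b);
      card Ob > q\<rbrakk> \<Longrightarrow> alg3_state V d k q l (Suc t) b b2 ((b + b2) / 2) sol"
| feasible: "\<lbrakk>alg3_state V d k q l t b1 b2 b sol; t < l; A_out V d k q b (Sb, Ob, \<sigma>b);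
      card Ob \<le> q\<rbrakk> \<Longrightarrow> alg3_state V d k q l (Suc t) b1 b ((b1 + b) / 2) (Sb, Ob, \<sigma>b)"

definition alg3_out :: "'a set \<Rightarrow> ('a \<Rightarrow> 'a \<Rightarrow> real) \<Rightarrow> nat \<Rightarrow> nat \<Rightarrow> nat
      \<Rightarrow> 'a set \<times> 'a set \<times> ('a \<Rightarrow> 'a) \<Rightarrow> bool" where
  "alg3_out V d k q l sol \<longleftrightarrow> (\<exists>b1 b2 b. alg3_state V d k q l l b1 b2 b sol)"

end

theory Submission
  imports Defs "HOL-Library.Disjoint_Sets"
begin

text \<open>Algorithm 3 only ever replaces its current solution by an output of some A(beta) with at
  most q outliers, and every run of A(beta) opens at most k centres; so it suffices that the
  initial solution, the output of A(2), has at most q outliers. Let m = ceiling((n - q)/k).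
  The balls B(s, NR_q(s)) around the centres s chosen by A(2) contain at least m points each,
  are pairwise disjoint, and avoid all remaining points, because every centre has the smallest
  NR_q among the remaining points and only points at distance more than 2 NR_q are kept. If
  outliers remain, all k centres were opened, so at least k m >= n - q points are not outliers.\<close>

definition nr_ball :: "'a set \<Rightarrow> ('a \<Rightarrow> 'a \<Rightarrow> real) \<Rightarrow> nat \<Rightarrow> nat \<Rightarrow> 'a \<Rightarrow> 'a set" where
  "nr_ball V d k q s = {j \<in> V. d s j \<le> NR V d k q s}"

definition feasible :: "nat \<Rightarrow> nat \<Rightarrow> 'a set \<times> 'a set \<times> ('a \<Rightarrow> 'a) \<Rightarrow> bool" where
  "feasible k q sol \<longleftrightarrow> card (fst sol) \<le> k \<and> card (fst (snd sol)) \<le> q"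

lemma feasible_iff [simp]: "feasible k q (S, Out, \<sigma>) \<longleftrightarrow> card S \<le> k \<and> card Out \<le> q"
  by (simp add: feasible_def)

lemma nr_rank_le_card: "nr_rank V k q \<le> int (card V)"
proof (cases "k = 0")
  case False
  then have "(real (card V) - real q) / real k \<le> real (card V) / real k"
    by (simp add: divide_right_mono)
  also have "\<dots> \<le> real (card V)"
    using False mult_left_mono[of 1 "real k" "real (card V)"] by (simp add: divide_le_eq)
  finally show ?thesis
    unfolding nr_rank_def by (simp add: ceiling_le_iff)
qed (simp add: nr_rank_def)

lemma card_le_add_mult_nr_rank:
  assumes "k \<ge> 1"
  shows "card V \<le> q + k * nat (nr_rank V k q)"
proof -
  have "(real (card V) - real q) / real k \<le> real_of_int (nr_rank V k q)"
    unfolding nr_rank_def by (rule le_of_int_ceiling)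
  then have "real (card V) - real q \<le> real k * real_of_int (nr_rank V k q)"
    using assms by (simp add: divide_le_eq mult.commute)
  also have "\<dots> \<le> real k * real (nat (nr_rank V k q))"
    by (intro mult_left_mono) linarith+
  finally have "real (card V) - real q \<le> real k * real (nat (nr_rank V k q))" .
  then show ?thesis
    by (simp flip: of_nat_add of_nat_mult)
qed

lemma finite_nr_ball: "finite V \<Longrightarrow> finite (nr_ball V d k q s)"
  by (simp add: nr_ball_def)

lemma sorted_le_nth_count:
  assumes "sorted xs" "i < length xs"
  shows "Suc i \<le> length (filter (\<lambda>x. x \<le> xs ! i) xs)"
proof -
  have "{0..i} \<subseteq> {j. j < length xs \<and> xs ! j \<le> xs ! i}"
    using assms by (auto intro: sorted_nth_mono)
  then have "card {0..i} \<le> card {j. j < length xs \<and> xs ! j \<le> xs ! i}"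
    by (intro card_mono) auto
  then show ?thesis
    by (simp add: length_filter_conv_card)
qed

lemma nr_rank_le_card_nr_ball:
  assumes "finite V"
  shows "nat (nr_rank V k q) \<le> card (nr_ball V d k q s)"
proof (cases "nr_rank V k q \<le> 0")
  case False
  define xs where "xs = sorted_list_of_multiset (image_mset (d s) (mset_set V))"
  define m where "m = nat (nr_rank V k q)"
  have len: "length xs = card V"
    unfolding xs_def by (metis mset_sorted_list_of_multiset size_image_mset size_mset size_mset_set)
  have "m - 1 < length xs" "Suc (m - 1) = m"
    using False nr_rank_le_card[of V k q] len by (auto simp: m_def)
  then have "m \<le> length (filter (\<lambda>x. x \<le> xs ! (m - 1)) xs)"
    using sorted_le_nth_count[of xs "m - 1"] by (simp add: xs_def)
  also have "\<dots> = size (filter_mset (\<lambda>x. x \<le> xs ! (m - 1)) (image_mset (d s) (mset_set V)))"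
    unfolding xs_def by (metis mset_filter mset_sorted_list_of_multiset size_mset)
  also have "\<dots> = card (nr_ball V d k q s)"
    using assms by (simp add: nr_ball_def NR_def xs_def m_def filter_mset_image_mset)
  finally show ?thesis
    by (simp add: m_def)
qed simp

lemma A_step_reachable_bounds:
  assumes "(A_step V d k q \<beta>)\<^sup>*\<^sup>* ({}, V) (S, P)"
  shows "P \<subseteq> V \<and> S \<subseteq> V \<and> finite S \<and> card S \<le> k"
  using assms
proof (induction rule: rtranclp_induct2)
  case (step S P S' P')
  then show ?case
    unfolding A_step_def Let_def by (auto simp: card_insert_if)
qed simp

lemma A_out_card_centres_le:
  assumes "A_out V d k q \<beta> (S, Out, \<sigma>)"
  shows "card S \<le> k"
  using assms A_step_reachable_bounds unfolding A_out_def by fastforce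

definition separated_centres :: "'a set \<Rightarrow> ('a \<Rightarrow> 'a \<Rightarrow> real) \<Rightarrow> nat \<Rightarrow> nat
    \<Rightarrow> 'a set \<Rightarrow> 'a set \<Rightarrow> bool" where
  "separated_centres V d k q S P \<longleftrightarrow>
     (\<forall>s\<in>S. \<forall>i\<in>P. NR V d k q s \<le> NR V d k q i \<and> 2 * NR V d k q i < d i s) \<and>
     (\<forall>s\<in>S. nr_ball V d k q s \<inter> P = {}) \<and>
     disjoint_family_on (nr_ball V d k q) S"

lemma A_step_2_separated_centres:
  assumes met: "ifkco_metric V d" and PV: "P \<subseteq> V" and SV: "S \<subseteq> V"
    and step: "A_step V d k q 2 (S, P) (S', P')"
    and inv: "separated_centres V d k q S P"
  shows "separated_centres V d k q S' P'"
proof -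
  let ?NR = "NR V d k q" and ?B = "nr_ball V d k q"
  obtain s where sP: "s \<in> P" and s_min: "\<forall>i\<in>P. ?NR s \<le> ?NR i"
    and S': "S' = insert s S" and P': "P' = {i \<in> P. 2 * ?NR i < d i s}"
    using step unfolding A_step_def Let_def by auto
  have sV: "s \<in> V"
    using sP PV by blast
  have sym: "d i j = d j i" and nonneg: "0 \<le> d i j" if "i \<in> V" "j \<in> V" for i j
    using met that unfolding ifkco_metric_def by auto
  have tri: "d i h \<le> d i j + d j h" if "i \<in> V" "j \<in> V" "h \<in> V" for i j h
    using met that unfolding ifkco_metric_def by auto
  have ball_s_avoids_P': "?B s \<inter> P' = {}"
  proof (intro equals0I)
    fix j assume "j \<in> ?B s \<inter> P'"
    then have "j \<in> V" "d s j \<le> ?NR s" "?NR s \<le> ?NR j" "2 * ?NR j < d j s"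
      using s_min P' by (auto simp: nr_ball_def)
    then show False
      using sym[OF sV] nonneg[OF sV] by fastforce
  qed
  have ball_s_avoids_old: "?B s \<inter> ?B t = {}" if "t \<in> S" for t
  proof (intro equals0I)
    fix j assume "j \<in> ?B s \<inter> ?B t"
    then have "j \<in> V" "t \<in> V" "d s j \<le> ?NR s" "d t j \<le> ?NR t"
      using SV that by (auto simp: nr_ball_def)
    moreover have "?NR t \<le> ?NR s" "2 * ?NR s < d s t"
      using inv that sP unfolding separated_centres_def by auto
    ultimately show False
      using tri[OF sV, of j t] sym[of j t] by linarith
  qed
  have "P' \<subseteq> P"
    using P' by blast
  then show ?thesis
    using inv s_min ball_s_avoids_P' ball_s_avoids_old P'
    unfolding separated_centres_def S' disjoint_family_on_def by (auto simp: Int_commute)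
qed

lemma A_step_2_reachable_separated_centres:
  assumes "ifkco_metric V d" and "(A_step V d k q 2)\<^sup>*\<^sup>* ({}, V) (S, P)"
  shows "separated_centres V d k q S P"
  using assms(2)
proof (induction rule: rtranclp_induct2)
  case refl
  then show ?case
    by (simp add: separated_centres_def disjoint_family_on_def)
next
  case (step S P S' P')
  then show ?case
    using A_step_reachable_bounds[OF step.hyps(1)]
    by (intro A_step_2_separated_centres[OF assms(1) _ _ step.hyps(2) step.IH]) auto
qed

lemma card_outliers_le_if_disjoint_nr_balls:
  assumes "finite V" "k \<ge> 1" "Out \<subseteq> V" "finite S" "card S = k"
    and "disjoint_family_on (nr_ball V d k q) S"
    and "\<forall>s\<in>S. nr_ball V d k q s \<inter> Out = {}"
  shows "card Out \<le> q"
proof -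
  define m where "m = nat (nr_rank V k q)"
  have "k * m \<le> (\<Sum>s\<in>S. card (nr_ball V d k q s))"
    using sum_bounded_below[of S m] nr_rank_le_card_nr_ball[OF assms(1)] assms(5)
    by (simp add: m_def mult.commute)
  also have "\<dots> = card (\<Union>s\<in>S. nr_ball V d k q s)"
    using assms(1,4,6) finite_nr_ball by (intro card_UN_disjoint' [symmetric]) auto
  also have "\<dots> \<le> card (V - Out)"
    using assms(1,7) by (intro card_mono) (auto simp: nr_ball_def)
  also have "\<dots> = card V - card Out"
    using assms(1,3) by (meson card_Diff_subset finite_subset)
  finally show ?thesis
    using card_le_add_mult_nr_rank[OF assms(2), of V q] card_mono[OF assms(1,3)]
    by (simp add: m_def)
qed

lemma A_out_2_feasible:
  assumes "finite V" "ifkco_metric V d" "k \<ge> 1" "A_out V d k q 2 (S, Out, \<sigma>)"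
  shows "feasible k q (S, Out, \<sigma>)"
proof -
  have run: "(A_step V d k q 2)\<^sup>*\<^sup>* ({}, V) (S, Out)" and stop: "Out = {} \<or> k \<le> card S"
    using assms(4) unfolding A_out_def by auto
  have "Out \<subseteq> V" "finite S" "card S \<le> k"
    using A_step_reachable_bounds[OF run] by auto
  moreover have "card Out \<le> q"
    using A_step_2_reachable_separated_centres[OF assms(2) run] stop
      card_outliers_le_if_disjoint_nr_balls[OF assms(1,3)] calculation
    unfolding separated_centres_def by (cases "Out = {}") auto
  ultimately show ?thesis
    by simp
qed

lemma alg3_state_feasible:
  assumes "finite V" "ifkco_metric V d" "k \<ge> 1"
    and "alg3_state V d k q l t \<beta>\<^sub>1 \<beta>\<^sub>2 \<beta> sol"
  shows "feasible k q sol"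
  using assms(4)
proof (induction rule: alg3_state.induct)
  case (init sol)
  then show ?case
    using A_out_2_feasible[OF assms(1-3)] by (cases sol) auto
next
  case (feasible t b1 b2 b sol Sb Ob \<sigma>b)
  then show ?case
    using A_out_card_centres_le by auto
qed

theorem lemma5:
  fixes V :: "'a set" and d :: "'a \<Rightarrow> 'a \<Rightarrow> real" and k q l :: nat
    and S Out :: "'a set" and \<sigma> :: "'a \<Rightarrow> 'a"
  assumes "finite V"
    and "ifkco_metric V d"
    and "k \<ge> 1"
    and "alg3_out V d k q l (S, Out, \<sigma>)"
  shows "card S \<le> k \<and> card Out \<le> q"
proof -
  obtain \<beta>\<^sub>1 \<beta>\<^sub>2 \<beta> where "alg3_state V d k q l l \<beta>\<^sub>1 \<beta>\<^sub>2 \<beta> (S, Out, \<sigma>)"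
    using assms(4) unfolding alg3_out_def by blast
  then show ?thesis
    using alg3_state_feasible[OF assms(1-3)] by fastforce
qed

end
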